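(* Let $n\ge 4$ and let $\mathcal D_n$ be a minimal DFA with state set $Q_n=\{0,\dots,n-1\}$, initial state $0$ and unique final state $n-1$, recognizing a two-sided ideal, and let $T_n$ be its transition semigroup. If $|T_n|=n^{n-2}+(n-2)2^{n-2}+1$, then $T_n=S_n$.
   Context: A two-sided ideal is a nonempty $L\subseteq\Sigma^*$ with $L=\Sigma^*L\Sigma^*$. The transition semigroup of a DFA is the set of transformations $q\mapsto\delta(q,w)$ of its states induced by nonempty words $w$. Notation: $(p\to q)$ maps $p$ to $q$ and fixes all other states; $(p_0,\dots,p_{k-1})$ is the cyclic permutation $p_0\mapsto\cdots\mapsto p_{k-1}\mapsto p_0$ fixing all other states. $S_n$ (for $n\ge4$) is the transition semigroup of the DFA $\mathcal W_n$ with states $Q_n$, initial state $0$, final states $\{n-1\}$, alphabet $\{a,b,c,d,e,f\}$, where $a$ induces $(1,2,\dots,n-2)$, $b$ induces $(1,2)$, $c$ induces $(n-2\to 1)$, $d$ induces $(n-2\to 0)$, $e$ maps every state in $\{0,\dots,n-2\}$ to $1$ and fixes $n-1$, and $f$ induces $(1\to n-1)$. *)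

theory Defs
  imports Main
begin

definition dfa :: "nat \<Rightarrow> 'a set \<Rightarrow> (nat \<Rightarrow> 'a \<Rightarrow> nat) \<Rightarrow> bool" where
  "dfa n Al delta \<longleftrightarrow> finite Al \<and> (\<forall>q<n. \<forall>x\<in>Al. delta q x < n)"

definition steps :: "(nat \<Rightarrow> 'a \<Rightarrow> nat) \<Rightarrow> nat \<Rightarrow> 'a list \<Rightarrow> nat" where
  "steps delta q w = fold (\<lambda>x p. delta p x) w q"

definition lang :: "nat \<Rightarrow> 'a set \<Rightarrow> (nat \<Rightarrow> 'a \<Rightarrow> nat) \<Rightarrow> 'a list set" where
  "lang n Al delta = {w \<in> lists Al. steps delta 0 w = n - 1}"

definition minimal_dfa :: "nat \<Rightarrow> 'a set \<Rightarrow> (nat \<Rightarrow> 'a \<Rightarrow> nat) \<Rightarrow> bool" where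
  "minimal_dfa n Al delta \<longleftrightarrow>
     (\<forall>q<n. \<exists>w\<in>lists Al. steps delta 0 w = q) \<and>
     (\<forall>p<n. \<forall>q<n. p \<noteq> q \<longrightarrow>
        (\<exists>w\<in>lists Al. (steps delta p w = n - 1) \<noteq> (steps delta q w = n - 1)))"

definition two_sided_ideal :: "'a set \<Rightarrow> 'a list set \<Rightarrow> bool" where
  "two_sided_ideal Al L \<longleftrightarrow> L \<noteq> {} \<and>
     L = {u @ v @ x | u v x. u \<in> lists Al \<and> v \<in> L \<and> x \<in> lists Al}"

text \<open>Transformation of Q_n induced by a word (identity outside Q_n, so that
  transformations are compared only on Q_n).\<close>
definition transf :: "nat \<Rightarrow> (nat \<Rightarrow> 'a \<Rightarrow> nat) \<Rightarrow> 'a list \<Rightarrow> nat \<Rightarrow> nat" where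
  "transf n delta w = (\<lambda>q. if q < n then steps delta q w else q)"

definition trans_semigroup :: "nat \<Rightarrow> 'a set \<Rightarrow> (nat \<Rightarrow> 'a \<Rightarrow> nat) \<Rightarrow> (nat \<Rightarrow> nat) set" where
  "trans_semigroup n Al delta = {transf n delta w | w. w \<in> lists Al \<and> w \<noteq> []}"

datatype letter = La | Lb | Lc | Ld | Le | Lf

definition deltaW :: "nat \<Rightarrow> nat \<Rightarrow> letter \<Rightarrow> nat" where
  "deltaW n q x = (case x of
      La \<Rightarrow> (if 1 \<le> q \<and> q < n - 2 then q + 1 else if q = n - 2 then 1 else q)
    | Lb \<Rightarrow> (if q = 1 then 2 else if q = 2 then 1 else q)
    | Lc \<Rightarrow> (if q = n - 2 then 1 else q)
    | Ld \<Rightarrow> (if q = n - 2 then 0 else q)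
    | Le \<Rightarrow> (if q \<le> n - 2 then 1 else q)
    | Lf \<Rightarrow> (if q = 1 then n - 1 else q))"

definition S :: "nat \<Rightarrow> (nat \<Rightarrow> nat) set" where
  "S n = trans_semigroup n UNIV (deltaW n)"

end

theory Submission
  imports Defs "HOL-Combinatorics.Cycles" "HOL-Library.FuncSet"
begin

(* Order the states by inclusion of their quotient languages: p \<le> q iff every word taking p
   to the final state n-1 also takes q there. For a minimal DFA of a two-sided ideal this is a
   partial order with least element 0 and greatest element n-1, the final state is a sink, and
   every transformation in T_n fixes n-1 and is monotone.

   If two distinct inner states 1, ..., n-2 are comparable, a monotone transformation is
   determined by the image v of 0 and its restriction to the inner states, which maps them into
   the up-set of v and the comparable pair to a comparable pair; there are fewer than
   n^(n-2) + (n-2) 2^(n-2) + 1 such data. Otherwise the inner states form an antichain and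
   monotonicity confines T_n to an explicit set of at most that many transformations, all of
   which are generated by the letters of W_n. So the cardinality hypothesis forces T_n = S_n. *)

section \<open>The quotient order and monotone transformations\<close>

lemma steps_Nil [simp]: "steps delta q [] = q"
  by (simp add: steps_def)

lemma steps_Cons [simp]: "steps delta q (x # w) = steps delta (delta q x) w"
  by (simp add: steps_def)

lemma steps_append: "steps delta q (u @ v) = steps delta (steps delta q u) v"
  by (simp add: steps_def)

lemma steps_less:
  assumes "\<forall>q<n. \<forall>x\<in>Al. delta q x < n" and "q < n" and "w \<in> lists Al"
  shows "steps delta q w < n"
  using assms(2,3) by (induction w arbitrary: q) (use assms(1) in auto)

definition monotone_transfs :: "nat \<Rightarrow> (nat \<Rightarrow> nat \<Rightarrow> bool) \<Rightarrow> (nat \<Rightarrow> nat) set" where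
  "monotone_transfs n R = {t. (\<forall>q\<ge>n. t q = q) \<and> (\<forall>q<n. t q < n) \<and> t (n - 1) = n - 1 \<and>
     (\<forall>p<n. \<forall>q<n. R p q \<longrightarrow> R (t p) (t q))}"

lemma trans_semigroup_subset_monotone_transfs:
  assumes closed: "\<forall>q<n. \<forall>x\<in>Al. delta q x < n"
    and sink: "\<forall>x\<in>Al. delta (n - 1) x = n - 1"
    and mono: "\<forall>x\<in>Al. \<forall>p<n. \<forall>q<n. R p q \<longrightarrow> R (delta p x) (delta q x)"
    and "0 < n"
  shows "trans_semigroup n Al delta \<subseteq> monotone_transfs n R"
proof
  fix t assume "t \<in> trans_semigroup n Al delta"
  then obtain w where w: "w \<in> lists Al" and t: "t = transf n delta w"
    by (auto simp: trans_semigroup_def)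
  have "steps delta (n - 1) w = n - 1"
    using w by (induction w) (use sink in auto)
  moreover have "R (steps delta p w) (steps delta q w)" if "p < n" "q < n" "R p q" for p q
    using w that by (induction w arbitrary: p q) (use closed mono in auto)
  ultimately show "t \<in> monotone_transfs n R"
    using steps_less[OF closed _ w] \<open>0 < n\<close> by (auto simp: t transf_def monotone_transfs_def)
qed

definition lang_le :: "nat \<Rightarrow> 'a set \<Rightarrow> (nat \<Rightarrow> 'a \<Rightarrow> nat) \<Rightarrow> nat \<Rightarrow> nat \<Rightarrow> bool" where
  "lang_le n Al delta p q \<longleftrightarrow> (\<forall>w\<in>lists Al. steps delta p w = n - 1 \<longrightarrow> steps delta q w = n - 1)"

lemma lang_le_step:
  "x \<in> Al \<Longrightarrow> lang_le n Al delta p q \<Longrightarrow> lang_le n Al delta (delta p x) (delta q x)"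
  unfolding lang_le_def by (metis Cons_in_lists_iff steps_Cons)

lemma ideal_lang_le_initial:
  assumes ideal: "two_sided_ideal Al (lang n Al delta)"
    and u: "u \<in> lists Al" "steps delta 0 u = q"
  shows "lang_le n Al delta 0 q"
  unfolding lang_le_def
proof (intro ballI impI)
  fix w assume "w \<in> lists Al" "steps delta 0 w = n - 1"
  then have "u @ w @ [] \<in> lang n Al delta"
    using ideal u unfolding two_sided_ideal_def lang_def by blast
  then show "steps delta q w = n - 1"
    using u by (simp add: lang_def steps_append)
qed

lemma minimal_lang_le_antisym:
  "minimal_dfa n Al delta \<Longrightarrow> p < n \<Longrightarrow> q < n \<Longrightarrow> lang_le n Al delta p q \<Longrightarrow>
   lang_le n Al delta q p \<Longrightarrow> p = q"
  unfolding minimal_dfa_def lang_le_def by blast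

lemma ideal_final_sink:
  assumes "0 < n" "minimal_dfa n Al delta" "two_sided_ideal Al (lang n Al delta)" "w \<in> lists Al"
  shows "steps delta (n-1) w = n-1"
proof -
  have "n-1 < n"
    using assms(1) by simp
  then obtain u where u: "u \<in> lists Al" "steps delta 0 u = n-1"
    using assms(2) unfolding minimal_dfa_def by blast
  then have "[] @ u @ w \<in> lang n Al delta"
    using assms(3,4) unfolding two_sided_ideal_def lang_def by blast
  then show ?thesis
    using u by (simp add: lang_def steps_append)
qed

lemma ideal_trans_semigroup_subset_monotone_transfs:
  assumes "0 < n" "dfa n Al delta" "minimal_dfa n Al delta" "two_sided_ideal Al (lang n Al delta)"
  shows "trans_semigroup n Al delta \<subseteq> monotone_transfs n (lang_le n Al delta)"
proof (rule trans_semigroup_subset_monotone_transfs)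
  show "\<forall>q<n. \<forall>x\<in>Al. delta q x < n"
    using assms(2) by (simp add: dfa_def)
  show "\<forall>x\<in>Al. delta (n-1) x = n-1"
  proof
    fix x assume "x \<in> Al"
    then show "delta (n-1) x = n-1"
      using ideal_final_sink[OF assms(1,3,4), of "[x]"] by simp
  qed
  show "\<forall>x\<in>Al. \<forall>p<n. \<forall>q<n. lang_le n Al delta p q \<longrightarrow> lang_le n Al delta (delta p x) (delta q x)"
    by (auto intro: lang_le_step)
qed fact

section \<open>Counting\<close>

lemma finite_has_minimal_wrt:
  assumes "finite X" "X \<noteq> {}" "antisymp_on X R" "transp_on X R"
  shows "\<exists>m\<in>X. \<forall>v\<in>X. R v m \<longrightarrow> v = m"
  using assms
proof (induction X rule: finite_ne_induct)
  case (singleton x)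
  show ?case by simp
next
  case (insert x F)
  then obtain m where m: "m \<in> F" "\<forall>v\<in>F. R v m \<longrightarrow> v = m"
    using antisymp_on_subset transp_on_subset by (metis subset_insertI)
  show ?case
  proof (cases "R x m")
    case True
    have "v = x" if "v \<in> insert x F" "R v x" for v
    proof (cases "v = x")
      case False
      with that have "v = m"
        using m transp_onD[OF insert.prems(2), of v x m] True by auto
      then show ?thesis
        using that True m(1) antisymp_onD[OF insert.prems(1), of x m] by auto
    qed
    then show ?thesis by blast
  next
    case False
    then show ?thesis
      using m by auto
  qed
qed

lemma sum_card_upsets_le:
  fixes g :: "nat \<Rightarrow> nat"
  assumes "finite X" "mono g" "antisymp_on X R" "transp_on X R"
  shows "(\<Sum>v\<in>X. g (card {y\<in>X. R v y})) \<le> (\<Sum>k=1..card X. g k)"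
  using assms(1,3,4)
proof (induction "card X" arbitrary: X)
  case 0
  then show ?case by simp
next
  case (Suc c X)
  then obtain m where m: "m \<in> X" "\<forall>v\<in>X. R v m \<longrightarrow> v = m"
    using finite_has_minimal_wrt[of X R] by fastforce
  define X' where "X' = X - {m}"
  have card_X': "card X' = c"
    using Suc.hyps(2) Suc.prems(1) m(1) by (simp add: X'_def)
  have upsets: "{y\<in>X. R v y} = {y\<in>X'. R v y}" if "v \<in> X'" for v
    using m(2) that unfolding X'_def by blast
  have "(\<Sum>v\<in>X. g (card {y\<in>X. R v y}))
      = g (card {y\<in>X. R m y}) + (\<Sum>v\<in>X'. g (card {y\<in>X. R v y}))"
    unfolding X'_def using Suc.prems(1) m(1) by (rule sum.remove)
  also have "\<dots> = g (card {y\<in>X. R m y}) + (\<Sum>v\<in>X'. g (card {y\<in>X'. R v y}))"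
    using upsets by simp
  also have "\<dots> \<le> g (Suc c) + (\<Sum>k=1..c. g k)"
  proof (rule add_mono)
    have "card {y\<in>X. R m y} \<le> Suc c"
      using Suc.hyps(2) Suc.prems(1) card_mono[of X "{y\<in>X. R m y}"] by auto
    then show "g (card {y\<in>X. R m y}) \<le> g (Suc c)"
      by (rule monoD[OF \<open>mono g\<close>])
    have "finite X'" "antisymp_on X' R" "transp_on X' R"
      using Suc.prems antisymp_on_subset[of X R X'] transp_on_subset[of X R X']
      by (auto simp: X'_def)
    then show "(\<Sum>v\<in>X'. g (card {y\<in>X'. R v y})) \<le> (\<Sum>k=1..c. g k)"
      using Suc.hyps(1)[OF card_X'[symmetric]] by (simp add: card_X')
  qed
  also have "\<dots> = (\<Sum>k=1..Suc c. g k)"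
    by simp
  finally show ?case
    by (simp only: Suc.hyps(2))
qed

lemma card_related_pairs_le:
  assumes "finite U" "reflp_on U R" "antisymp_on U R"
  shows "2 * card {(x, y). x \<in> U \<and> y \<in> U \<and> R x y} \<le> card U * (card U + 1)"
proof -
  define C where "C = {(x, y). x \<in> U \<and> y \<in> U \<and> R x y}"
  have sub: "C \<subseteq> U \<times> U" "C\<inverse> \<subseteq> U \<times> U"
    by (auto simp: C_def)
  have fin: "finite C" "finite (C\<inverse>)"
    using finite_subset[OF sub(1)] finite_subset[OF sub(2)] \<open>finite U\<close> by auto
  have diag: "C \<inter> C\<inverse> = (\<lambda>x. (x, x)) ` U"
    using assms(2,3) by (auto simp: C_def reflp_on_def antisymp_on_def)
  have "2 * card C = card (C \<union> C\<inverse>) + card (C \<inter> C\<inverse>)"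
    using card_Un_Int[OF fin] by simp
  also have "card (C \<union> C\<inverse>) \<le> card (U \<times> U)"
    using sub \<open>finite U\<close> by (intro card_mono) auto
  also have "card (C \<inter> C\<inverse>) = card U"
    unfolding diag by (rule card_image) (simp add: inj_on_def)
  finally show ?thesis
    by (simp add: C_def card_cartesian_product algebra_simps)
qed

lemma card_PiE_pair_constrained_le:
  assumes I: "finite I" "a \<in> I" "b \<in> I" "a \<noteq> b" and "finite U"
  shows "card {h \<in> PiE I (\<lambda>_. U). R (h a) (h b)}
    \<le> card U ^ (card I - 2) * card {(x, y). x \<in> U \<and> y \<in> U \<and> R x y}"
proof -
  define H where "H = {h \<in> PiE I (\<lambda>_. U). R (h a) (h b)}"
  define C where "C = {(x, y). x \<in> U \<and> y \<in> U \<and> R x y}"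
  define J where "J = I - {a, b}"
  define split where "split h = (restrict h J, (h a, h b))" for h :: "'a \<Rightarrow> 'b"
  have "inj_on split H"
  proof (rule inj_onI)
    fix h h' assume h: "h \<in> H" "h' \<in> H" and eq: "split h = split h'"
    show "h = h'"
    proof (rule extensionalityI[of _ I])
      show "h \<in> extensional I" "h' \<in> extensional I"
        using h by (auto simp: H_def PiE_def)
      fix x assume "x \<in> I"
      moreover have "restrict h J x = restrict h' J x" "h a = h' a" "h b = h' b"
        using eq by (simp_all add: split_def)
      ultimately show "h x = h' x"
        by (cases "x = a \<or> x = b") (auto simp: J_def)
    qed
  qed
  moreover have "split ` H \<subseteq> PiE J (\<lambda>_. U) \<times> C"
  proof
    fix z assume "z \<in> split ` H"
    then obtain h where h: "h \<in> H" "z = split h"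
      by blast
    then have "\<forall>i\<in>I. h i \<in> U" "R (h a) (h b)"
      by (auto simp: H_def PiE_iff)
    then show "z \<in> PiE J (\<lambda>_. U) \<times> C"
      using I by (simp add: h(2) split_def C_def J_def restrict_PiE_iff)
  qed
  moreover have "finite C"
    using finite_subset[of C "U \<times> U"] \<open>finite U\<close> by (auto simp: C_def)
  then have "finite (PiE J (\<lambda>_. U) \<times> C)"
    using I(1) \<open>finite U\<close> by (simp add: J_def finite_PiE)
  ultimately have "card H \<le> card (PiE J (\<lambda>_. U)) * card C"
    using card_inj_on_le card_cartesian_product by metis
  also have "card (PiE J (\<lambda>_. U)) = card U ^ (card I - 2)"
    using I by (simp add: card_PiE J_def card_Diff_subset numeral_2_eq_2)
  finally show ?thesis
    by (simp add: H_def C_def)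
qed

lemma card_PiE_related_le:
  assumes I: "finite I" "a \<in> I" "b \<in> I" "a \<noteq> b"
    and U: "finite U" "reflp_on U R" "antisymp_on U R"
  shows "2 * card {h \<in> PiE I (\<lambda>_. U). R (h a) (h b)} \<le> card U ^ (card I - 1) * (card U + 1)"
proof -
  have "2 * card {h \<in> PiE I (\<lambda>_. U). R (h a) (h b)}
      \<le> card U ^ (card I - 2) * (2 * card {(x, y). x \<in> U \<and> y \<in> U \<and> R x y})"
    using card_PiE_pair_constrained_le[OF I U(1), of R] by simp
  also have "\<dots> \<le> card U ^ (card I - 2) * (card U * (card U + 1))"
    using card_related_pairs_le[OF U] by simp
  also have "\<dots> = card U ^ (card I - 1) * (card U + 1)"
  proof -
    have "card {a, b} \<le> card I"
      using I by (intro card_mono) auto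
    then have "card I - 1 = Suc (card I - 2)"
      using I by simp
    then show ?thesis
      by (simp add: algebra_simps)
  qed
  finally show ?thesis .
qed

lemma sum_le_twice_last_if_doubling:
  fixes b :: "nat \<Rightarrow> nat"
  assumes "\<And>j. 1 \<le> j \<Longrightarrow> j < m \<Longrightarrow> 2 * b j \<le> b (Suc j)"
  shows "(\<Sum>i=1..m. b i) \<le> 2 * b m"
  using assms
proof (induction m)
  case 0
  then show ?case by simp
next
  case (Suc m)
  show ?case
  proof (cases "m = 0")
    case False
    have "(\<Sum>i=1..Suc m. b i) = (\<Sum>i=1..m. b i) + b (Suc m)"
      by simp
    also have "\<dots> \<le> 2 * b m + b (Suc m)"
      using Suc by simp
    also have "\<dots> \<le> 2 * b (Suc m)"
      using Suc.prems[of m] False by simp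
    finally show ?thesis .
  qed simp
qed

text \<open>The first three terms of the binomial expansion of \<open>(u + 1) ^ k\<close>, with denominators cleared.\<close>
lemma pow_Suc_ge_three_terms:
  fixes u k :: nat
  shows "u^k * (2*u^2 + 2*k*u + k*(k-1)) \<le> 2*u^2*(u+1)^k"
proof (induction k)
  case 0
  then show ?case by simp
next
  case (Suc k)
  have step: "u * (2*u^2 + 2*Suc k*u + Suc k*k) + k*(k-1) = (u+1) * (2*u^2 + 2*k*u + k*(k-1))"
    by (cases k) (simp_all add: algebra_simps power2_eq_square)
  have "u^Suc k * (2*u^2 + 2*Suc k*u + Suc k*(Suc k - 1)) = u^k * (u * (2*u^2 + 2*Suc k*u + Suc k*k))"
    by (simp add: algebra_simps)
  also have "\<dots> \<le> u^k * ((u+1) * (2*u^2 + 2*k*u + k*(k-1)))"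
    by (rule mult_le_mono2) (metis step le_add1)
  also have "\<dots> = (u+1) * (u^k * (2*u^2 + 2*k*u + k*(k-1)))"
    by (simp add: algebra_simps)
  also have "\<dots> \<le> (u+1) * (2*u^2*(u+1)^k)"
    using Suc.IH by (rule mult_le_mono2)
  also have "\<dots> = 2*u^2*(u+1)^Suc k"
    by (simp add: algebra_simps)
  finally show ?case .
qed

lemma double_pow_le_pow_Suc:
  fixes u k :: nat
  assumes "0 < u" "2*u^2 \<le> 2*k*u + k*(k-1)"
  shows "2*u^k \<le> (u+1)^k"
proof -
  have "u^k * (4*u^2) \<le> u^k * (2*u^2 + 2*k*u + k*(k-1))"
    using assms(2) by (intro mult_le_mono2) simp
  also have "\<dots> \<le> 2*u^2*(u+1)^k"
    by (rule pow_Suc_ge_three_terms)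
  finally have "(2*u^2) * (2*u^k) \<le> (2*u^2) * (u+1)^k"
    by (simp add: algebra_simps)
  then show ?thesis
    using assms(1) by simp
qed

lemma summand_doubling:
  fixes n j :: nat
  assumes n: "13 \<le> n" and j: "1 \<le> j" "j < n - 2"
  shows "2 * ((j+1)^(n-3)*(j+2)) \<le> (j+2)^(n-3)*(j+3)"
proof -
  define k where "k = n - 3"
  have "2*(j+1)^2 \<le> 2*k*(j+1) + k*(k-1)"
  proof -
    have "(j+1)*(j+1) \<le> (j+1)*(k+1)"
      using j by (intro mult_le_mono2) (simp add: k_def)
    moreover have "4*(k-1) \<le> k*(k-1)"
      using n by (intro mult_le_mono1) (simp add: k_def)
    ultimately show ?thesis
      using j n by (simp add: power2_eq_square algebra_simps k_def)
  qed
  then have "2*(j+1)^k \<le> (j+2)^k"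
    using double_pow_le_pow_Suc[of "j+1" k] by simp
  then have "2*(j+1)^k*(j+2) \<le> (j+2)^k*(j+3)"
    by (intro mult_le_mono) simp_all
  then show ?thesis
    by (simp add: k_def algebra_simps)
qed

lemma counting_bound_ineq_large:
  assumes n: "13 \<le> n"
  shows "n^(n-3)*(n+1) + (\<Sum>j=1..n-2. (j+1)^(n-3)*(j+2)) \<le> 2*n^(n-2)"
proof -
  define k where "k = n - 3"
  define b where "b j = (j+1)^k*(j+2)" for j :: nat
  have doubling: "2 * b j \<le> b (Suc j)" if "1 \<le> j" "j < n - 2" for j
    using summand_doubling[OF n that] by (simp add: b_def k_def algebra_simps)
  have "2*(n-1)^(n-4) \<le> n^(n-4)"
  proof -
    define d where "d = n - 13"
    then have "n = d + 13"
      using n by simp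
    then have "2*(n-1)^2 \<le> 2*(n-4)*(n-1) + (n-4)*(n-4-1)"
      by (simp add: power2_eq_square algebra_simps)
    then show ?thesis
      using double_pow_le_pow_Suc[of "n-1" "n-4"] n by simp
  qed
  moreover have "2 * b (n-2) = 2*(n-1)^(n-4) * ((n-1)*n)" "n^k*(n-1) = n^(n-4) * ((n-1)*n)"
  proof -
    have "k = Suc (n-4)" "n-2+1 = n-1" "n-2+2 = n"
      using n by (simp_all add: k_def)
    then show "2 * b (n-2) = 2*(n-1)^(n-4) * ((n-1)*n)" "n^k*(n-1) = n^(n-4) * ((n-1)*n)"
      unfolding b_def by (simp_all only: power_Suc mult_ac)
  qed
  ultimately have "2 * b (n-2) \<le> n^k*(n-1)"
    by (simp only: mult_le_mono1)
  then have "(\<Sum>j=1..n-2. b j) \<le> n^k*(n-1)"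
    using sum_le_twice_last_if_doubling[of "n-2" b] doubling by fastforce
  then have "n^k*(n+1) + (\<Sum>j=1..n-2. b j) \<le> n^k*(n+1) + n^k*(n-1)"
    by (rule add_left_mono)
  also have "\<dots> = n^k*((n+1) + (n-1))"
    by (simp only: add_mult_distrib2)
  also have "\<dots> = 2*n^(n-2)"
  proof -
    have "n-2 = Suc k" "(n+1) + (n-1) = 2*n"
      using n by (simp_all add: k_def)
    then show ?thesis
      by simp
  qed
  finally show ?thesis
    by (simp only: b_def k_def)
qed

lemma counting_bound_ineq_small:
  assumes "4 \<le> n" "n \<le> 12"
  shows "n^(n-3)*(n+1) + (\<Sum>k=1..n-2. (k+1)^(n-3)*(k+2)) + 2 < 2*(n^(n-2) + (n-2)*2^(n-2) + 1)"
proof -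
  have "n \<in> {4,5,6,7,8,9,10,11,12}"
    using assms by auto
  then show ?thesis
    unfolding atLeastAtMost_upt sum_set_upt_conv_sum_list_nat
    by (elim insertE emptyE; simp add: upt_rec; (simp only: One_nat_def[symmetric] Suc_1 Suc_numeral)?; simp)
qed


text \<open>The left-hand side is the bound from \<open>sum_upset_bound\<close> on twice the number of monotone
  transformations for an order in which two inner states are comparable.\<close>

lemma counting_bound_ineq:
  assumes "4 \<le> n"
  shows "n^(n-3)*(n+1) + (\<Sum>k=1..n-2. (k+1)^(n-3)*(k+2)) + 2 < 2*(n^(n-2) + (n-2)*2^(n-2) + 1)"
proof (cases "n \<le> 12")
  case True
  then show ?thesis
    using assms by (rule counting_bound_ineq_small[rotated])
next
  case False
  then have "n^(n-3)*(n+1) + (\<Sum>k=1..n-2. (k+1)^(n-3)*(k+2)) \<le> 2*n^(n-2)"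
    by (intro counting_bound_ineq_large) simp
  moreover have "0 < (n-2)*2^(n-2)"
    using assms by simp
  moreover have "\<And>A B C :: nat. A \<le> 2*B \<Longrightarrow> 0 < C \<Longrightarrow> A + 2 < 2*(B+C+1)"
    by simp
  ultimately show ?thesis
    by blast
qed

section \<open>Orders with least state 0 and greatest state n-1\<close>

locale Qn =
  fixes n :: nat
  assumes n_ge_4: "4 \<le> n"
begin

abbreviation Inner :: "nat set" where
  "Inner \<equiv> {1..n-2}"

lemma sum_lessThan_split: "(\<Sum>v<n. f v) = f 0 + (\<Sum>v\<in>Inner. f v) + f (n-1)"
proof -
  have "{..<n} = insert 0 (insert (n-1) Inner)" "0 \<notin> insert (n-1) Inner" "n-1 \<notin> Inner"
    using n_ge_4 by auto
  then show ?thesis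
    by (simp add: algebra_simps)
qed

lemma inj_on_value_0_restrict_Inner:
  "inj_on (\<lambda>t. (t 0, restrict t Inner)) {t. (\<forall>q\<ge>n. t q = q) \<and> t (n-1) = n-1}"
proof (rule inj_onI)
  fix s t
  assume s: "s \<in> {t. (\<forall>q\<ge>n. t q = q) \<and> t (n-1) = n-1}"
    and t: "t \<in> {t. (\<forall>q\<ge>n. t q = q) \<and> t (n-1) = n-1}"
    and eq: "(s 0, restrict s Inner) = (t 0, restrict t Inner)"
  show "s = t"
  proof
    fix q
    consider "q = 0" | "q \<in> Inner" | "q = n-1" | "n \<le> q"
      by fastforce
    then show "s q = t q"
    proof cases
      case 2
      have "restrict s Inner q = restrict t Inner q"
        using eq by simp
      then show ?thesis
        using 2 by simp
    qed (use s t eq in auto)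
  qed
qed

lemma card_le_sum_fibres:
  assumes F: "F \<subseteq> {t. (\<forall>q\<ge>n. t q = q) \<and> t (n-1) = n-1}"
    and H: "\<And>t. t \<in> F \<Longrightarrow> t 0 < n \<and> restrict t Inner \<in> H (t 0)"
    and fin: "\<And>v. v < n \<Longrightarrow> finite (H v)"
  shows "finite F" "card F \<le> (\<Sum>v<n. card (H v))"
proof -
  let ?phi = "\<lambda>t. (t 0, restrict t Inner)"
  have inj: "inj_on ?phi F"
    using inj_on_subset[OF inj_on_value_0_restrict_Inner F] .
  have sub: "?phi ` F \<subseteq> Sigma {..<n} H"
    using H by auto
  have fin_Sigma: "finite (Sigma {..<n} H)"
    using fin by (intro finite_SigmaI) auto
  show "finite F"
    using finite_imageD[OF finite_subset[OF sub fin_Sigma] inj] .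
  have "card F \<le> card (Sigma {..<n} H)"
    using card_inj_on_le[OF inj sub fin_Sigma] .
  also have "\<dots> = (\<Sum>v<n. card (H v))"
    using fin by (simp add: card_SigmaI)
  finally show "card F \<le> (\<Sum>v<n. card (H v))" .
qed

definition S_explicit :: "(nat \<Rightarrow> nat) set" where
  "S_explicit = {t. (\<forall>q\<ge>n. t q = q) \<and> t (n-1) = n-1 \<and>
     (t 0 = 0 \<and> (\<forall>p\<in>Inner. t p < n) \<or>
      t 0 \<in> Inner \<and> (\<forall>p\<in>Inner. t p \<in> {t 0, n-1}) \<or>
      t 0 = n-1 \<and> (\<forall>p\<in>Inner. t p = n-1))}"

lemma card_S_explicit:
  shows "finite S_explicit" "card S_explicit \<le> n^(n-2) + (n-2)*2^(n-2) + 1"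
proof -
  define H where "H v = (if v = 0 then PiE Inner (\<lambda>_. {..<n}) else PiE Inner (\<lambda>_. {v, n-1}))" for v
  have H: "t 0 < n \<and> restrict t Inner \<in> H (t 0)" if "t \<in> S_explicit" for t
    using that n_ge_4 by (auto simp: S_explicit_def H_def PiE_iff)
  have fin: "finite (H v)" for v
    by (simp add: H_def finite_PiE)
  have sub: "S_explicit \<subseteq> {t. (\<forall>q\<ge>n. t q = q) \<and> t (n-1) = n-1}"
    by (auto simp: S_explicit_def)
  show "finite S_explicit"
    using card_le_sum_fibres(1)[OF sub H fin] .
  have "card (H v) = 2^(n-2)" if "v \<in> Inner" for v
  proof -
    have "card {v, n-1} = 2"
      using that by auto
    then show ?thesis
      using that by (simp add: H_def card_PiE)
  qed
  moreover have "card (H 0) = n^(n-2)" "card (H (n-1)) = 1"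
    using n_ge_4 by (simp_all add: H_def card_PiE)
  ultimately have "(\<Sum>v<n. card (H v)) = n^(n-2) + (n-2)*2^(n-2) + 1"
    by (simp add: sum_lessThan_split)
  then show "card S_explicit \<le> n^(n-2) + (n-2)*2^(n-2) + 1"
    using card_le_sum_fibres(2)[OF sub H fin] by simp
qed

end

locale ideal_order = Qn +
  fixes R :: "nat \<Rightarrow> nat \<Rightarrow> bool"
  assumes refl: "R q q"
    and trans: "R p q \<Longrightarrow> R q r \<Longrightarrow> R p r"
    and antisym: "p < n \<Longrightarrow> q < n \<Longrightarrow> R p q \<Longrightarrow> R q p \<Longrightarrow> p = q"
    and bot: "q < n \<Longrightarrow> R 0 q"
    and top: "q < n \<Longrightarrow> R q (n-1)"
begin

definition upset :: "nat \<Rightarrow> nat set" where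
  "upset v = {y. y < n \<and> R v y}"

lemma upset_0: "upset 0 = {..<n}"
  using bot by (auto simp: upset_def)

lemma upset_top: "upset (n-1) = {n-1}"
  using n_ge_4 antisym[of "n-1"] top refl by (auto simp: upset_def)

lemma upset_Inner:
  assumes "v \<in> Inner"
  shows "upset v = insert (n-1) {y\<in>Inner. R v y}"
proof -
  have "v < n"
    using assms n_ge_4 by auto
  have "y \<noteq> 0" if "R v y" for y
  proof
    assume "y = 0"
    then have "v = 0"
      using antisym[OF \<open>v < n\<close>, of 0] bot[OF \<open>v < n\<close>] that n_ge_4 by simp
    then show False
      using assms by simp
  qed
  then show ?thesis
    using top[OF \<open>v < n\<close>] n_ge_4 by (fastforce simp: upset_def)
qed

lemma monotone_transfs_upset:
  assumes "t \<in> monotone_transfs n R" "p < n"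
  shows "t p \<in> upset (t 0)"
  using assms bot[OF assms(2)] n_ge_4 by (auto simp: monotone_transfs_def upset_def)

lemma monotone_transfs_subset_S_explicit:
  assumes discrete: "\<And>p q. p \<in> Inner \<Longrightarrow> q \<in> Inner \<Longrightarrow> R p q \<Longrightarrow> p = q"
  shows "monotone_transfs n R \<subseteq> S_explicit"
proof
  fix t assume t: "t \<in> monotone_transfs n R"
  have up: "t p \<in> upset (t 0)" if "p \<in> Inner" for p
    using that n_ge_4 by (intro monotone_transfs_upset[OF t]) auto
  have "t 0 < n"
    using t n_ge_4 by (simp add: monotone_transfs_def)
  then consider "t 0 = 0" | "t 0 \<in> Inner" | "t 0 = n-1"
    by fastforce
  then have "t 0 = 0 \<and> (\<forall>p\<in>Inner. t p < n) \<or>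
      t 0 \<in> Inner \<and> (\<forall>p\<in>Inner. t p \<in> {t 0, n-1}) \<or>
      t 0 = n-1 \<and> (\<forall>p\<in>Inner. t p = n-1)"
  proof cases
    case 1
    then show ?thesis
      using up by (simp add: upset_def)
  next
    case 2
    have "t p \<in> {t 0, n-1}" if "p \<in> Inner" for p
    proof -
      have "t p = n-1 \<or> t p \<in> Inner \<and> R (t 0) (t p)"
        using up[OF that] 2 by (simp add: upset_Inner)
      then show ?thesis
        using discrete[OF 2, of "t p"] by auto
    qed
    then show ?thesis
      using 2 by simp
  next
    case 3
    have "t p = n-1" if "p \<in> Inner" for p
      using up[OF that] unfolding 3 upset_top by simp
    then show ?thesis
      using 3 by simp
  qed
  then show "t \<in> S_explicit"
    using t by (simp add: monotone_transfs_def S_explicit_def)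
qed

lemma sum_upset_bound:
  "(\<Sum>v<n. card (upset v)^(n-3) * (card (upset v) + 1))
     \<le> n^(n-3)*(n+1) + (\<Sum>k=1..n-2. (k+1)^(n-3)*(k+2)) + 2"
proof -
  define g where "g k = (k+1)^(n-3)*(k+2)" for k :: nat
  have "mono g"
    unfolding mono_def g_def by (intro allI impI mult_le_mono power_mono) simp_all
  moreover have "antisymp_on Inner R" "transp_on Inner R"
    using antisym trans n_ge_4 by (auto simp: antisymp_on_def transp_on_def)
  ultimately have "(\<Sum>v\<in>Inner. g (card {y\<in>Inner. R v y})) \<le> (\<Sum>k=1..card Inner. g k)"
    by (intro sum_card_upsets_le) simp_all
  moreover have "card (upset v)^(n-3) * (card (upset v) + 1) = g (card {y\<in>Inner. R v y})"
    if "v \<in> Inner" for v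
    using that by (simp add: upset_Inner g_def)
  ultimately have Inner_part:
    "(\<Sum>v\<in>Inner. card (upset v)^(n-3) * (card (upset v) + 1)) \<le> (\<Sum>k=1..n-2. g k)"
    by simp
  have "(\<Sum>v<n. card (upset v)^(n-3) * (card (upset v) + 1))
      = card (upset 0)^(n-3) * (card (upset 0) + 1)
        + (\<Sum>v\<in>Inner. card (upset v)^(n-3) * (card (upset v) + 1))
        + card (upset (n-1))^(n-3) * (card (upset (n-1)) + 1)"
    by (rule sum_lessThan_split)
  also have "\<dots> = n^(n-3)*(n+1) + (\<Sum>v\<in>Inner. card (upset v)^(n-3) * (card (upset v) + 1)) + 2"
    by (simp only: upset_0 upset_top) simp
  finally show ?thesis
    using Inner_part by (simp add: g_def)
qed

lemma card_monotone_transfs_less: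
  assumes ab: "a \<in> Inner" "b \<in> Inner" "a \<noteq> b" "R a b"
  shows "finite (monotone_transfs n R)" "card (monotone_transfs n R) < n^(n-2) + (n-2)*2^(n-2) + 1"
proof -
  define H where "H v = {h \<in> PiE Inner (\<lambda>_. upset v). R (h a) (h b)}" for v
  have sub: "monotone_transfs n R \<subseteq> {t. (\<forall>q\<ge>n. t q = q) \<and> t (n-1) = n-1}"
    by (auto simp: monotone_transfs_def)
  have fin: "finite (H v)" for v
    by (rule finite_subset[of _ "PiE Inner (\<lambda>_. upset v)"]) (auto simp: H_def upset_def finite_PiE)
  have H: "t 0 < n \<and> restrict t Inner \<in> H (t 0)" if "t \<in> monotone_transfs n R" for t
  proof -
    have "t p \<in> upset (t 0)" if "p \<in> Inner" for p
      using that n_ge_4 by (intro monotone_transfs_upset[OF \<open>t \<in> monotone_transfs n R\<close>]) auto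
    moreover have "R (t a) (t b)" "t 0 < n"
      using that ab n_ge_4 by (auto simp: monotone_transfs_def)
    ultimately show ?thesis
      using ab by (auto simp: H_def)
  qed
  show "finite (monotone_transfs n R)"
    using card_le_sum_fibres(1)[OF sub H fin] .
  have card_le: "card (monotone_transfs n R) \<le> (\<Sum>v<n. card (H v))"
    using card_le_sum_fibres(2)[OF sub H fin] .
  have "2 * card (H v) \<le> card (upset v)^(n-3) * (card (upset v) + 1)" for v
  proof -
    have "reflp_on (upset v) R" "antisymp_on (upset v) R"
      using refl antisym by (auto simp: reflp_on_def antisymp_on_def upset_def)
    then show ?thesis
      using card_PiE_related_le[of Inner a b "upset v" R] ab
      by (simp add: H_def upset_def numeral_3_eq_3)
  qed
  then have "2 * (\<Sum>v<n. card (H v)) \<le> (\<Sum>v<n. card (upset v)^(n-3) * (card (upset v) + 1))"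
    by (simp add: sum_distrib_left sum_mono)
  also have "\<dots> < 2 * (n^(n-2) + (n-2)*2^(n-2) + 1)"
    using sum_upset_bound counting_bound_ineq[OF n_ge_4] by linarith
  finally have "(\<Sum>v<n. card (H v)) < n^(n-2) + (n-2)*2^(n-2) + 1"
    by simp
  with card_le show "card (monotone_transfs n R) < n^(n-2) + (n-2)*2^(n-2) + 1"
    by (rule le_less_trans)
qed

end

section \<open>The letters of W_n generate S_n\<close>

lemma conj_collapse:
  assumes "bij \<sigma>"
  shows "\<sigma> \<circ> id(p := r) \<circ> inv \<sigma> = id(\<sigma> p := \<sigma> r)"
  using assms by (auto simp: fun_eq_iff bij_inv_eq_iff bij_is_surj surj_f_inv_f bij_is_inj)

lemma image_fun_upd_collision:
  assumes "i \<in> A" "j \<in> A" "i \<noteq> j" "g i = g j"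
  shows "g(i := z) ` A = insert z (g ` A)"
proof
  show "g(i := z) ` A \<subseteq> insert z (g ` A)"
    by auto
  have "g x \<in> g(i := z) ` A" if "x \<in> A" for x
    using that assms by (cases "x = i") (metis fun_upd_other imageI)+
  then show "insert z (g ` A) \<subseteq> g(i := z) ` A"
    using assms(1) by auto
qed

context Qn
begin

abbreviation tw :: "letter list \<Rightarrow> nat \<Rightarrow> nat" where
  "tw w \<equiv> transf n (deltaW n) w"

lemma deltaW_less: "q < n \<Longrightarrow> deltaW n q x < n"
  using n_ge_4 by (cases x) (auto simp: deltaW_def)

lemma tw_append: "tw (u @ v) = tw v \<circ> tw u"
  using steps_less[of n UNIV "deltaW n"] deltaW_less
  by (auto simp: fun_eq_iff transf_def steps_append)

lemma S_iff: "t \<in> S n \<longleftrightarrow> (\<exists>w. w \<noteq> [] \<and> t = tw w)"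
  by (auto simp: S_def trans_semigroup_def)

lemma S_comp: "s \<in> S n \<Longrightarrow> t \<in> S n \<Longrightarrow> t \<circ> s \<in> S n"
  unfolding S_iff by (metis append_is_Nil_conv tw_append)

lemma tw_letter_in_S: "tw [x] \<in> S n"
  unfolding S_iff by blast

lemma tw_letter: "tw [x] q = (if q < n then deltaW n q x else q)"
  by (simp add: transf_def)

lemma tw_Lb: "tw [Lb] = transpose 1 2"
  using n_ge_4 by (auto simp: fun_eq_iff tw_letter deltaW_def transpose_def)

lemma tw_Lc: "tw [Lc] = id(n-2 := 1)"
  using n_ge_4 by (auto simp: fun_eq_iff tw_letter deltaW_def)

lemma tw_Ld: "tw [Ld] = id(n-2 := 0)"
  using n_ge_4 by (auto simp: fun_eq_iff tw_letter deltaW_def)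

lemma tw_Le: "tw [Le] = (\<lambda>q. if q \<le> n-2 then 1 else q)"
  using n_ge_4 by (auto simp: fun_eq_iff tw_letter deltaW_def)

lemma tw_Lf: "tw [Lf] = id(1 := n-1)"
  using n_ge_4 by (auto simp: fun_eq_iff tw_letter deltaW_def)

lemma tw_La_Suc: "1 \<le> q \<Longrightarrow> q < n-2 \<Longrightarrow> tw [La] q = Suc q"
  by (simp add: tw_letter deltaW_def)

lemma tw_La_permutes: "tw [La] permutes Inner"
proof -
  define A' where "A' q = (if q = 1 then n-2 else if 2 \<le> q \<and> q \<le> n-2 then q-1 else q)" for q
  have "A' \<circ> tw [La] = id" "tw [La] \<circ> A' = id"
    using n_ge_4 by (auto simp: fun_eq_iff A'_def tw_letter deltaW_def)
  then have "bij (tw [La])"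
    by (rule o_bij)
  moreover have "tw [La] q = q" if "q \<notin> Inner" for q
    using that n_ge_4 by (auto simp: tw_letter deltaW_def)
  ultimately show ?thesis
    unfolding permutes_def bij_iff by blast
qed

lemma id_in_S: "id \<in> S n"
  using S_comp[OF tw_letter_in_S tw_letter_in_S, of Lb Lb] by (simp add: tw_Lb)

lemma funpow_in_S: "t \<in> S n \<Longrightarrow> t ^^ k \<in> S n"
  by (induction k) (simp_all add: id_in_S S_comp)

lemma inv_in_S:
  assumes "p \<in> S n" "permutation p"
  shows "inv p \<in> S n"
proof -
  obtain m where "p ^^ m = id" "0 < m"
    using permutation_is_nilpotent[OF assms(2)] by blast
  then obtain k where k: "p ^^ Suc k = id"
    using gr0_implies_Suc by blast
  have "p \<circ> p ^^ k = id"
    using k by (simp only: funpow.simps(2))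
  moreover have "p ^^ k \<circ> p = id"
    using k by (simp only: funpow_Suc_right)
  ultimately have "inv p = p ^^ k"
    by (rule inv_unique_comp)
  then show ?thesis
    using funpow_in_S[OF assms(1)] by simp
qed

lemma conj_in_S:
  assumes "p \<in> S n" "permutation p" "t \<in> S n"
  shows "p \<circ> t \<circ> inv p \<in> S n"
  using assms by (intro S_comp inv_in_S) auto

lemma conj_transpose_by_cycle:
  assumes "1 \<le> i" "Suc (Suc i) < n-1"
  shows "transpose (Suc i) (Suc (Suc i)) = tw [La] \<circ> transpose i (Suc i) \<circ> inv (tw [La])"
proof -
  let ?A = "tw [La]"
  have "bij ?A"
    using tw_La_permutes permutes_bij by blast
  have "transpose (?A i) (?A (Suc i)) \<circ> ?A = ?A \<circ> transpose i (Suc i)"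
    using transpose_comp_eq[OF \<open>bij ?A\<close>] \<open>bij ?A\<close> by (simp add: bij_is_inj)
  then have "transpose (Suc i) (Suc (Suc i)) \<circ> ?A \<circ> inv ?A = ?A \<circ> transpose i (Suc i) \<circ> inv ?A"
    using assms tw_La_Suc[of i] tw_La_Suc[of "Suc i"] by simp
  moreover have "?A \<circ> inv ?A = id"
    using surj_iff bij_is_surj[OF \<open>bij ?A\<close>] by blast
  ultimately show ?thesis
    by (simp add: comp_assoc)
qed

lemma adjacent_transpose_in_S: "1 \<le> i \<Longrightarrow> Suc i < n-1 \<Longrightarrow> transpose i (Suc i) \<in> S n"
proof (induction i)
  case (Suc i)
  show ?case
  proof (cases "i = 0")
    case True
    then show ?thesis
      using tw_letter_in_S[of Lb] by (simp add: tw_Lb numeral_2_eq_2)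
  next
    case False
    have "permutation (tw [La])"
      using tw_La_permutes permutation_permutes by blast
    moreover have "transpose i (Suc i) \<in> S n"
      using Suc False by simp
    ultimately have "tw [La] \<circ> transpose i (Suc i) \<circ> inv (tw [La]) \<in> S n"
      by (intro conj_in_S tw_letter_in_S)
    moreover have "transpose (Suc i) (Suc (Suc i)) = tw [La] \<circ> transpose i (Suc i) \<circ> inv (tw [La])"
      using Suc.prems False by (intro conj_transpose_by_cycle) auto
    ultimately show ?thesis
      by (simp only:)
  qed
qed simp

lemma transpose_less_in_S: "1 \<le> x \<Longrightarrow> x < y \<Longrightarrow> y \<le> n-2 \<Longrightarrow> transpose x y \<in> S n"
proof (induction y)
  case (Suc y)
  show ?case
  proof (cases "x = y")
    case True
    then show ?thesis
      using Suc.prems adjacent_transpose_in_S by simp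
  next
    case False
    then have eq: "transpose x (Suc y) = transpose y (Suc y) \<circ> transpose x y \<circ> transpose y (Suc y)"
      using transpose_comp_triple[of "Suc y" x y] Suc.prems by (simp add: transpose_commute)
    have "transpose x y \<in> S n" "transpose y (Suc y) \<in> S n"
      using Suc False adjacent_transpose_in_S by auto
    then show ?thesis
      unfolding eq by (intro S_comp)
  qed
qed simp

lemma transpose_in_S: "x \<in> Inner \<Longrightarrow> y \<in> Inner \<Longrightarrow> transpose x y \<in> S n"
  using transpose_less_in_S[of x y] transpose_less_in_S[of y x] id_in_S
  by (cases x y rule: linorder_cases) (auto simp: transpose_commute)

lemma permutes_Inner_in_S:
  assumes "p permutes Inner"
  shows "p \<in> S n"
  using assms finite_atLeastAtMost
proof (induction rule: permutes_induct)
  case id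
  then show ?case
    by (rule id_in_S)
next
  case (swap a b p)
  then show ?case
    using S_comp transpose_in_S by blast
qed

lemma collapse_conj_in_S:
  assumes "id(p := r) \<in> S n" "\<sigma> permutes Inner"
  shows "id(\<sigma> p := \<sigma> r) \<in> S n"
proof -
  have "\<sigma> \<circ> id(p := r) \<circ> inv \<sigma> \<in> S n"
    using assms permutes_Inner_in_S permutation_permutes by (intro conj_in_S) blast+
  then show ?thesis
    using conj_collapse[of \<sigma> p r] permutes_bij[OF assms(2)] by simp
qed

lemma collapse_Inner_in_S:
  assumes "i \<in> Inner" "j \<in> Inner" "i \<noteq> j"
  shows "id(i := j) \<in> S n"
proof -
  \<comment> \<open>conjugate \<open>c = (n-2 \<rightarrow> 1)\<close> by \<open>(1 j')\<close>, then by \<open>(n-2 i)\<close>\<close>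
  define j' where "j' = transpose (n-2) i j"
  have Inner: "n-2 \<in> Inner" "1 \<in> Inner" "j' \<in> Inner"
    using assms n_ge_4 by (auto simp: j'_def transpose_def)
  have "j' \<noteq> n-2" "n-2 \<noteq> 1"
    using assms n_ge_4 by (auto simp: j'_def transpose_def)
  then have "id(transpose 1 j' (n-2) := transpose 1 j' 1) = id(n-2 := j')"
    by simp
  then have "id(n-2 := j') \<in> S n"
    using collapse_conj_in_S[of "n-2" 1 "transpose 1 j'"] tw_letter_in_S[of Lc] Inner
    by (simp add: tw_Lc permutes_swap_id)
  then show ?thesis
    using collapse_conj_in_S[of "n-2" j' "transpose (n-2) i"] Inner assms
    by (simp add: j'_def permutes_swap_id)
qed

lemma collapse_to_0_in_S:
  assumes "i \<in> Inner"
  shows "id(i := 0) \<in> S n"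
proof -
  have "transpose (n-2) i 0 = 0" "n-2 \<in> Inner"
    using assms n_ge_4 by (auto simp: transpose_def)
  then show ?thesis
    using collapse_conj_in_S[of "n-2" 0 "transpose (n-2) i"] tw_letter_in_S[of Ld] assms
    by (simp add: tw_Ld permutes_swap_id)
qed

lemma collapse_to_top_in_S:
  assumes "i \<in> Inner"
  shows "id(i := n-1) \<in> S n"
proof -
  have "transpose 1 i (n-1) = n-1" "1 \<in> Inner"
    using assms n_ge_4 by (auto simp: transpose_def)
  then show ?thesis
    using collapse_conj_in_S[of 1 "n-1" "transpose 1 i"] tw_letter_in_S[of Lf] assms
    by (simp add: tw_Lf permutes_swap_id)
qed

lemma Inner_endo_in_S:
  assumes "\<forall>q. q \<notin> Inner \<longrightarrow> g q = q" "g ` Inner \<subseteq> Inner"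
  shows "g \<in> S n"
  using assms
proof (induction "card Inner - card (g ` Inner)" arbitrary: g rule: less_induct)
  case less
  show ?case
  proof (cases "inj_on g Inner")
    case True
    then have "bij_betw g Inner Inner"
      using less.prems(2) by (simp add: bij_betw_def endo_inj_surj)
    then have "g permutes Inner"
      using less.prems(1) by (intro bij_imp_permutes) auto
    then show ?thesis
      by (rule permutes_Inner_in_S)
  next
    case False
    then obtain i j where ij: "i \<in> Inner" "j \<in> Inner" "i \<noteq> j" "g i = g j"
      unfolding inj_on_def by blast
    have "card (g ` Inner) < card Inner"
      using False less.prems(2) card_mono[of Inner "g ` Inner"] inj_on_iff_eq_card[of Inner g] by simp
    moreover have "card Inner \<le> card (g ` Inner)" if "Inner \<subseteq> g ` Inner"
      using that by (intro card_mono) auto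
    ultimately obtain z where z: "z \<in> Inner" "z \<notin> g ` Inner"
      by force
    define g' where "g' = g(i := z)"
    have "g' ` Inner = insert z (g ` Inner)"
      unfolding g'_def using ij by (rule image_fun_upd_collision)
    then have "card Inner - card (g' ` Inner) < card Inner - card (g ` Inner)"
      using z \<open>card (g ` Inner) < card Inner\<close> finite_subset[OF less.prems(2)] by simp
    moreover have "\<forall>q. q \<notin> Inner \<longrightarrow> g' q = q" "g' ` Inner \<subseteq> Inner"
      using less.prems z ij by (auto simp: g'_def)
    ultimately have "g' \<in> S n"
      by (rule less.hyps)
    moreover have "g = g' \<circ> id(i := j)"
      using ij by (auto simp: fun_eq_iff g'_def)
    ultimately show ?thesis
      using S_comp[OF collapse_Inner_in_S[OF ij(1-3)]] by simp
  qed
qed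

lemma Inner_to_states_in_S:
  assumes "\<forall>q. q \<notin> Inner \<longrightarrow> t q = q" "\<forall>p\<in>Inner. t p < n"
  shows "t \<in> S n"
  using assms
proof (induction "card {p\<in>Inner. t p \<notin> Inner}" arbitrary: t rule: less_induct)
  case less
  show ?case
  proof (cases "{p\<in>Inner. t p \<notin> Inner} = {}")
    case True
    then show ?thesis
      using less.prems(1) by (intro Inner_endo_in_S) auto
  next
    case False
    then obtain i where i: "i \<in> Inner" "t i \<notin> Inner"
      by blast
    define t' where "t' = t(i := i)"
    have "{p\<in>Inner. t' p \<notin> Inner} = {p\<in>Inner. t p \<notin> Inner} - {i}"
      using i by (auto simp: t'_def)
    moreover have "card ({p\<in>Inner. t p \<notin> Inner} - {i}) < card {p\<in>Inner. t p \<notin> Inner}"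
      by (rule card_Diff1_less) (use i in auto)
    ultimately have "card {p\<in>Inner. t' p \<notin> Inner} < card {p\<in>Inner. t p \<notin> Inner}"
      by simp
    moreover have "\<forall>q. q \<notin> Inner \<longrightarrow> t' q = q" "\<forall>p\<in>Inner. t' p < n"
      using less.prems i n_ge_4 by (auto simp: t'_def)
    ultimately have "t' \<in> S n"
      by (rule less.hyps)
    have decomp: "t = t' \<circ> id(i := t i)"
      using less.prems(1) i by (auto simp: fun_eq_iff t'_def)
    have "id(i := t i) \<in> S n"
    proof -
      have "t i = 0 \<or> t i = n-1"
        using less.prems(2) i by fastforce
      then show ?thesis
        using collapse_to_0_in_S[OF i(1)] collapse_to_top_in_S[OF i(1)] by auto
    qed
    then show ?thesis
      using \<open>t' \<in> S n\<close> by (subst decomp) (rule S_comp)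
  qed
qed

lemma Inner_to_pair_in_S:
  assumes "\<forall>q\<ge>n. t q = q" "t (n-1) = n-1" "t 0 \<in> Inner" "\<forall>p\<in>Inner. t p \<in> {t 0, n-1}"
  shows "t \<in> S n"
proof -
  define v where "v = t 0"
  define g where "g q = (if q \<in> Inner then if t q = n-1 then n-1 else 0 else q)" for q
  have "g \<in> S n"
    using n_ge_4 by (intro Inner_to_states_in_S) (auto simp: g_def)
  moreover have "transpose 1 v \<in> S n"
    using assms(3) n_ge_4 by (intro transpose_in_S) (auto simp: v_def)
  moreover have "t = transpose 1 v \<circ> tw [Le] \<circ> g"
  proof
    fix q
    consider "q = 0" | "q \<in> Inner" | "q = n-1" | "n \<le> q"
      by fastforce
    then show "t q = (transpose 1 v \<circ> tw [Le] \<circ> g) q"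
      using assms n_ge_4 by cases (auto simp: g_def tw_Le v_def transpose_def)
  qed
  ultimately show ?thesis
    by (simp add: S_comp tw_letter_in_S)
qed

lemma S_explicit_subset_S: "S_explicit \<subseteq> S n"
proof
  fix t assume t: "t \<in> S_explicit"
  have fix_large: "\<forall>q\<ge>n. t q = q" and fix_top: "t (n-1) = n-1"
    using t by (simp_all add: S_explicit_def)
  have cases_q: "q = 0 \<or> q \<in> Inner \<or> q = n-1 \<or> n \<le> q" for q
    by auto
  consider "t 0 = 0" "\<forall>p\<in>Inner. t p < n"
    | "t 0 \<in> Inner" "\<forall>p\<in>Inner. t p \<in> {t 0, n-1}"
    | "t 0 = n-1" "\<forall>p\<in>Inner. t p = n-1"
    using t by (auto simp: S_explicit_def)
  then show "t \<in> S n"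
  proof cases
    case 1
    have "t q = q" if "q \<notin> Inner" for q
      using 1 fix_top fix_large cases_q[of q] that by auto
    then show ?thesis
      using 1 by (intro Inner_to_states_in_S) auto
  next
    case 2
    then show ?thesis
      using fix_large fix_top by (intro Inner_to_pair_in_S)
  next
    case 3
    have "t = tw [Lf] \<circ> tw [Le]"
    proof
      fix q
      show "t q = (tw [Lf] \<circ> tw [Le]) q"
        using 3 fix_large fix_top cases_q[of q] n_ge_4 by (auto simp: tw_Le tw_Lf)
    qed
    then show ?thesis
      by (simp add: S_comp tw_letter_in_S)
  qed
qed

lemma deltaW_top: "deltaW n (n-1) x = n-1"
  using n_ge_4 by (cases x) (auto simp: deltaW_def)

lemma deltaW_mono:
  assumes "p < n" "q < n" "p = 0 \<or> q = n-1 \<or> p = q"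
  shows "deltaW n p x = 0 \<or> deltaW n q x = n-1 \<or> deltaW n p x = deltaW n q x"
  using assms n_ge_4 by (cases x) (auto simp: deltaW_def)

lemma S_subset_S_explicit: "S n \<subseteq> S_explicit"
proof -
  define R where "R p q \<longleftrightarrow> p = 0 \<or> q = n-1 \<or> p = q" for p q
  interpret ideal_order n R
    using n_ge_4 by unfold_locales (auto simp: R_def)
  have "S n \<subseteq> monotone_transfs n R"
    unfolding S_def
  proof (rule trans_semigroup_subset_monotone_transfs)
    show "\<forall>q<n. \<forall>x\<in>UNIV. deltaW n q x < n"
      using deltaW_less by blast
    show "\<forall>x\<in>UNIV. deltaW n (n-1) x = n-1" "0 < n"
      using deltaW_top n_ge_4 by auto
    show "\<forall>x\<in>UNIV. \<forall>p<n. \<forall>q<n. R p q \<longrightarrow> R (deltaW n p x) (deltaW n q x)"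
      using deltaW_mono by (simp add: R_def)
  qed
  also have "\<dots> \<subseteq> S_explicit"
    by (rule monotone_transfs_subset_S_explicit) (auto simp: R_def)
  finally show ?thesis .
qed

lemma S_eq_S_explicit: "S n = S_explicit"
  using S_subset_S_explicit S_explicit_subset_S by blast

end

lemma (in ideal_order) eq_S_if_card_eq:
  assumes F: "F \<subseteq> monotone_transfs n R"
    and card_F: "card F = n^(n-2) + (n-2)*2^(n-2) + 1"
  shows "F = S n"
proof (cases "\<exists>a\<in>Inner. \<exists>b\<in>Inner. a \<noteq> b \<and> R a b")
  case True
  then obtain a b where "a \<in> Inner" "b \<in> Inner" "a \<noteq> b" "R a b"
    by blast
  then have "finite (monotone_transfs n R)"
    "card (monotone_transfs n R) < n^(n-2) + (n-2)*2^(n-2) + 1"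
    by (rule card_monotone_transfs_less)+
  moreover have "card F \<le> card (monotone_transfs n R)"
    using calculation(1) F by (rule card_mono)
  ultimately show ?thesis
    using card_F by simp
next
  case False
  then have "monotone_transfs n R \<subseteq> S_explicit"
    by (intro monotone_transfs_subset_S_explicit) blast
  with F have "F \<subseteq> S_explicit"
    by (rule order_trans)
  then have "F = S_explicit"
    using card_S_explicit card_F by (intro card_seteq) simp_all
  then show ?thesis
    by (simp add: S_eq_S_explicit)
qed

lemma ideal_order_lang_le:
  assumes "4 \<le> n" "minimal_dfa n Al delta" "two_sided_ideal Al (lang n Al delta)"
  shows "ideal_order n (lang_le n Al delta)"
proof
  show "4 \<le> n"
    by fact
  show "lang_le n Al delta q q" for q
    by (simp add: lang_le_def)
  show "lang_le n Al delta p r" if "lang_le n Al delta p q" "lang_le n Al delta q r" for p q r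
    using that by (simp add: lang_le_def)
  show "p = q" if "p < n" "q < n" "lang_le n Al delta p q" "lang_le n Al delta q p" for p q
    using minimal_lang_le_antisym assms(2) that by blast
  show "lang_le n Al delta 0 q" if q: "q < n" for q
  proof -
    obtain u where "u \<in> lists Al" "steps delta 0 u = q"
      using assms(2) q unfolding minimal_dfa_def by blast
    then show ?thesis
      using ideal_lang_le_initial assms(3) by blast
  qed
  show "lang_le n Al delta q (n-1)" for q
    using ideal_final_sink[OF _ assms(2,3)] assms(1) by (simp add: lang_le_def)
qed

theorem theorem5:
  fixes n :: nat and Al :: "'a set" and delta :: "nat \<Rightarrow> 'a \<Rightarrow> nat"
  assumes "n \<ge> 4"
    and "dfa n Al delta"
    and "minimal_dfa n Al delta"
    and "two_sided_ideal Al (lang n Al delta)"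
    and "card (trans_semigroup n Al delta) = n ^ (n - 2) + (n - 2) * 2 ^ (n - 2) + 1"
  shows "trans_semigroup n Al delta = S n"
proof -
  interpret ideal_order n "lang_le n Al delta"
    using ideal_order_lang_le assms(1,3,4) .
  have "trans_semigroup n Al delta \<subseteq> monotone_transfs n (lang_le n Al delta)"
    using n_ge_4 by (intro ideal_trans_semigroup_subset_monotone_transfs assms(2-4)) simp
  then show ?thesis
    using assms(5) by (rule eq_S_if_card_eq)
qed

end
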